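(* Let $L_f>0$, $R_0\ge1$ and $\epsilon>0$ be given. For problem dimension $n>2\lceil\sqrt{L_f}R_0/(8\sqrt\epsilon)\rceil$, there exists a smooth problem of the form described in the context with aggregate smoothness constant $L_f$ and $\|x^0-x^*\|\le R_0$ such that any DPM algorithm takes at least $\Omega(\sqrt{L_f}R_0/\sqrt\epsilon)$ communication rounds to find an $\epsilon$-optimal solution (a point $\bar x\in X$ with $f(\bar x)-f(x^* )\le\epsilon$).
   Context: Problem form: $\min_{x\in X}\{f(x):=\max_{p\in P}\sum_{i=1}^mp_if_i(x)-\rho^*(p)+u(x)\}$ with $X\subseteq\mathbb{R}^n$ closed convex, $P\subseteq\{p\in\mathbb{R}^m:\sum_ip_i=1,p\ge0\}$ closed convex, $\rho^*$, $u$ proper closed convex, and $f_i(x)=\max_{\pi_i\in\Pi_i}\langle A_ix,\pi_i\rangle-f_i^*(\pi_i)$; smooth means $A_i=I$, $f_i$ convex with Lipschitz gradient and $f_i^*$ its conjugate. $x^*$ is an optimal solution. The aggregate smoothness constant is $\max_{p\in P}L_p$, where $L_p$ is the Lipschitz constant of $\nabla\sum_ip_if_i$. $x^0=0$ is the initial point. A DPM algorithm on a star network (server plus workers, worker $i$ knowing only $f_i$, server knowing $u$, $\rho^*$, $P$) maintains a server memory $\mathcal M_s^t$ and for each worker primal and dual memories $\mathcal M_i^t$, $\mathcal M_i^{\pi,t}$, all $\{0\}$ at $t=0$. In each communication round $t$: each worker sends one vector from $\mathrm{span}(\mathcal M_i^{t-1})$ to the server and receives one vector from $\mathrm{span}(\mathcal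 M_s^{t-1})$; between rounds each worker may, any finite number of times, pick $\bar x\in\mathrm{span}$(its primal memory), $\bar\pi_i\in\mathrm{span}$(its dual memory), $\tau\ge0$, compute $\pi_i'\in\arg\max_{\pi_i\in\Pi_i}\langle A_i\bar x,\pi_i\rangle-f_i^*(\pi_i)-\frac\tau2\|\pi_i-\bar\pi_i\|^2$, add $A_i^\top\pi_i',A_i^\top\bar\pi_i$ to its primal memory and $\pi_i',A_i\bar x$ to its dual memory; and the server may, any finite number of times, add $\arg\min_{x\in X}u(x)+\frac\eta2\|x-\bar x\|^2$ for $\bar x\in\mathrm{span}$(its memory), $\eta>0$. The output after $t$ rounds lies in the span of all primal memories and the server memory. The $\Omega$ hides absolute constants. *)

theory Defs
  imports Complex_Main
begin

section \<open>Vectors of R^n, represented as functions nat => real vanishing from index n on\<close>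

type_synonym vec = "nat \<Rightarrow> real"

definition Vsp :: "nat \<Rightarrow> vec set" where
  "Vsp n = {x. \<forall>i\<ge>n. x i = 0}"

definition vzero :: vec where "vzero = (\<lambda>_. 0)"
definition vadd :: "vec \<Rightarrow> vec \<Rightarrow> vec" where "vadd x y = (\<lambda>i. x i + y i)"
definition vsub :: "vec \<Rightarrow> vec \<Rightarrow> vec" where "vsub x y = (\<lambda>i. x i - y i)"

definition ip :: "nat \<Rightarrow> vec \<Rightarrow> vec \<Rightarrow> real" where
  "ip n x y = (\<Sum>i<n. x i * y i)"

definition vnorm :: "nat \<Rightarrow> vec \<Rightarrow> real" where
  "vnorm n x = sqrt (ip n x x)"

definition vspan :: "vec set \<Rightarrow> vec set" where
  "vspan S = {v. \<exists>F c. finite F \<and> F \<subseteq> S \<and> v = (\<lambda>i. \<Sum>w\<in>F. c w * w i)}"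

definition convex_V :: "nat \<Rightarrow> vec set \<Rightarrow> bool" where
  "convex_V n S \<longleftrightarrow> S \<subseteq> Vsp n \<and>
     (\<forall>x\<in>S. \<forall>y\<in>S. \<forall>a::real. 0 \<le> a \<and> a \<le> 1 \<longrightarrow> (\<lambda>i. a * x i + (1 - a) * y i) \<in> S)"

definition conv_seq :: "nat \<Rightarrow> (nat \<Rightarrow> vec) \<Rightarrow> vec \<Rightarrow> bool" where
  "conv_seq n xs x \<longleftrightarrow> (\<forall>i<n. (\<lambda>k. xs k i) \<longlonglongrightarrow> x i)"

definition closed_V :: "nat \<Rightarrow> vec set \<Rightarrow> bool" where
  "closed_V n S \<longleftrightarrow> S \<subseteq> Vsp n \<and>
     (\<forall>xs x. (\<forall>k. xs k \<in> S) \<and> x \<in> Vsp n \<and> conv_seq n xs x \<longrightarrow> x \<in> S)"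

text \<open>An extended-valued function is represented by its effective domain D and its values on D.\<close>
definition convex_fun_on :: "vec set \<Rightarrow> (vec \<Rightarrow> real) \<Rightarrow> bool" where
  "convex_fun_on D g \<longleftrightarrow> (\<forall>x\<in>D. \<forall>y\<in>D. \<forall>a::real. 0 \<le> a \<and> a \<le> 1 \<longrightarrow>
      g (\<lambda>i. a * x i + (1 - a) * y i) \<le> a * g x + (1 - a) * g y)"

text \<open>Closed = closed epigraph.\<close>
definition closed_fun :: "nat \<Rightarrow> vec set \<Rightarrow> (vec \<Rightarrow> real) \<Rightarrow> bool" where
  "closed_fun n D g \<longleftrightarrow> (\<forall>xs ts x t. (\<forall>k. xs k \<in> D \<and> g (xs k) \<le> ts k) \<and> x \<in> Vsp n \<and>
      conv_seq n xs x \<and> ts \<longlonglongrightarrow> t \<longrightarrow> x \<in> D \<and> g x \<le> t)"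

definition proper_closed_convex :: "nat \<Rightarrow> vec set \<Rightarrow> (vec \<Rightarrow> real) \<Rightarrow> bool" where
  "proper_closed_convex n D g \<longleftrightarrow> D \<noteq> {} \<and> convex_V n D \<and> convex_fun_on D g \<and> closed_fun n D g"

definition has_grad :: "nat \<Rightarrow> (vec \<Rightarrow> real) \<Rightarrow> vec \<Rightarrow> vec \<Rightarrow> bool" where
  "has_grad n f g x \<longleftrightarrow> g \<in> Vsp n \<and>
     (\<forall>e>0. \<exists>d>0. \<forall>h\<in>Vsp n. vnorm n h < d \<longrightarrow> \<bar>f (vadd x h) - f x - ip n g h\<bar> \<le> e * vnorm n h)"

definition grad_lip :: "nat \<Rightarrow> (vec \<Rightarrow> real) \<Rightarrow> real \<Rightarrow> bool" where
  "grad_lip n f L \<longleftrightarrow> (\<exists>G. (\<forall>x\<in>Vsp n. has_grad n f (G x) x) \<and>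
     (\<forall>x\<in>Vsp n. \<forall>y\<in>Vsp n. vnorm n (vsub (G x) (G y)) \<le> L * vnorm n (vsub x y)))"

definition smooth_const :: "nat \<Rightarrow> (vec \<Rightarrow> real) \<Rightarrow> real" where
  "smooth_const n f = Inf {L. L \<ge> 0 \<and> grad_lip n f L}"

text \<open>Fenchel conjugate: effective domain and values.\<close>
definition conj_dom :: "nat \<Rightarrow> (vec \<Rightarrow> real) \<Rightarrow> vec set" where
  "conj_dom n f = {\<pi>\<in>Vsp n. bdd_above ((\<lambda>x. ip n x \<pi> - f x) ` Vsp n)}"

definition conj :: "nat \<Rightarrow> (vec \<Rightarrow> real) \<Rightarrow> vec \<Rightarrow> real" where
  "conj n f \<pi> = (SUP x\<in>Vsp n. ip n x \<pi> - f x)"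

record problem =
  dim :: nat
  nw :: nat                       (* m, number of workers, indexed 0..m-1 *)
  fs :: "nat \<Rightarrow> vec \<Rightarrow> real"
  Xs :: "vec set"
  Ps :: "vec set"
  rdom :: "vec set"               (* effective domain of rho^* *)
  rho :: "vec \<Rightarrow> real"            (* rho^* on its domain *)
  udom :: "vec set"
  u :: "vec \<Rightarrow> real"

definition combo :: "problem \<Rightarrow> vec \<Rightarrow> vec \<Rightarrow> real" where
  "combo pr p = (\<lambda>x. \<Sum>i<nw pr. p i * fs pr i x)"

text \<open>Objective f(x) (finite on X \<inter> dom u).\<close>
definition obj :: "problem \<Rightarrow> vec \<Rightarrow> real" where
  "obj pr x = (SUP p\<in>Ps pr \<inter> rdom pr. combo pr p x - rho pr p) + u pr x"

definition smooth_problem :: "problem \<Rightarrow> bool" where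
  "smooth_problem pr \<longleftrightarrow> (let n = dim pr; m = nw pr in
     m \<ge> 1 \<and>
     closed_V n (Xs pr) \<and> convex_V n (Xs pr) \<and>
     Ps pr \<subseteq> {p\<in>Vsp m. (\<forall>i<m. 0 \<le> p i) \<and> (\<Sum>i<m. p i) = 1} \<and>
     closed_V m (Ps pr) \<and> convex_V m (Ps pr) \<and> Ps pr \<inter> rdom pr \<noteq> {} \<and>
     proper_closed_convex m (rdom pr) (rho pr) \<and>
     proper_closed_convex n (udom pr) (u pr) \<and>
     (\<forall>i<m. convex_fun_on (Vsp n) (fs pr i) \<and> (\<exists>L. grad_lip n (fs pr i) L)))"

definition agg_smooth :: "problem \<Rightarrow> real \<Rightarrow> bool" where
  "agg_smooth pr L \<longleftrightarrow> (\<forall>p\<in>Ps pr. smooth_const (dim pr) (combo pr p) \<le> L) \<and>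
     (\<exists>p\<in>Ps pr. smooth_const (dim pr) (combo pr p) = L)"

definition is_opt :: "problem \<Rightarrow> vec \<Rightarrow> bool" where
  "is_opt pr xs \<longleftrightarrow> xs \<in> Xs pr \<inter> udom pr \<and> (\<forall>x\<in>Xs pr \<inter> udom pr. obj pr xs \<le> obj pr x)"

definition eps_opt :: "problem \<Rightarrow> real \<Rightarrow> vec \<Rightarrow> bool" where
  "eps_opt pr \<epsilon> x \<longleftrightarrow> x \<in> Xs pr \<inter> udom pr \<and> (\<forall>xs. is_opt pr xs \<longrightarrow> obj pr x - obj pr xs \<le> \<epsilon>)"

section \<open>DPM algorithms (span-based memory model on the star network)\<close>

text \<open>State: (server memory, worker primal memories, worker dual memories).\<close>
type_synonym state = "vec set \<times> (nat \<Rightarrow> vec set) \<times> (nat \<Rightarrow> vec set)"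

definition init_state :: state where
  "init_state = ({vzero}, \<lambda>_. {vzero}, \<lambda>_. {vzero})"

text \<open>Worker oracle (A_i = I): argmax over Pi_i = dom f_i^* of <x,pi> - f_i^*(pi) - tau/2 ||pi - pib||^2.\<close>
definition worker_oracle :: "nat \<Rightarrow> (vec \<Rightarrow> real) \<Rightarrow> vec \<Rightarrow> vec \<Rightarrow> real \<Rightarrow> vec set" where
  "worker_oracle n f xb pib tau = {\<pi>'\<in>conj_dom n f. \<forall>\<pi>\<in>conj_dom n f.
      ip n xb \<pi> - conj n f \<pi> - tau / 2 * (vnorm n (vsub \<pi> pib))\<^sup>2
        \<le> ip n xb \<pi>' - conj n f \<pi>' - tau / 2 * (vnorm n (vsub \<pi>' pib))\<^sup>2}"

definition prox_set :: "problem \<Rightarrow> real \<Rightarrow> vec \<Rightarrow> vec set" where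
  "prox_set pr eta xb = {x'\<in>Xs pr \<inter> udom pr. \<forall>x\<in>Xs pr \<inter> udom pr.
      u pr x' + eta / 2 * (vnorm (dim pr) (vsub x' xb))\<^sup>2 \<le> u pr x + eta / 2 * (vnorm (dim pr) (vsub x xb))\<^sup>2}"

inductive local_step :: "problem \<Rightarrow> state \<Rightarrow> state \<Rightarrow> bool" for pr where
  worker: "\<lbrakk> i < nw pr; xb \<in> vspan (Mp i); pib \<in> vspan (Md i); tau \<ge> 0;
             \<pi>' \<in> worker_oracle (dim pr) (fs pr i) xb pib tau \<rbrakk>
           \<Longrightarrow> local_step pr (Ms, Mp, Md) (Ms, Mp(i := Mp i \<union> {\<pi>', pib}), Md(i := Md i \<union> {\<pi>', xb}))"
| server: "\<lbrakk> xb \<in> vspan Ms; eta > 0; x' \<in> prox_set pr eta xb \<rbrakk>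
           \<Longrightarrow> local_step pr (Ms, Mp, Md) (Ms \<union> {x'}, Mp, Md)"

definition comm_round :: "problem \<Rightarrow> state \<Rightarrow> state \<Rightarrow> bool" where
  "comm_round pr S S' \<longleftrightarrow> (case S of (Ms, Mp, Md) \<Rightarrow>
     (\<exists>sv rv. (\<forall>i<nw pr. sv i \<in> vspan (Mp i) \<and> rv i \<in> vspan Ms) \<and>
        S' = (Ms \<union> sv ` {..<nw pr}, (\<lambda>i. if i < nw pr then Mp i \<union> {rv i} else Mp i), Md)))"

fun reach :: "problem \<Rightarrow> nat \<Rightarrow> state \<Rightarrow> bool" where
  "reach pr 0 S = (local_step pr)\<^sup>*\<^sup>* init_state S"
| "reach pr (Suc t) S = (\<exists>S1 S2. reach pr t S1 \<and> comm_round pr S1 S2 \<and> (local_step pr)\<^sup>*\<^sup>* S2 S)"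

definition outputs :: "problem \<Rightarrow> state \<Rightarrow> vec set" where
  "outputs pr S = (case S of (Ms, Mp, Md) \<Rightarrow> vspan (Ms \<union> (\<Union>i<nw pr. Mp i)))"

end

theory Submission
  imports Defs "HOL-Analysis.L2_Norm" "HOL-Analysis.Convex"
begin

text \<open>
  Nesterov's chain construction, split between three workers. With \<open>x\<^sub>-\<^sub>1 = a\<close>, worker 0
  holds the odd links \<open>(L/8)(x\<^sub>i\<^sub>-\<^sub>1 - x\<^sub>i)\<^sup>2\<close>, worker 1 the even links (including
  \<open>(L/8)(a - x\<^sub>0)\<^sup>2\<close>), and worker 2 the quadratic \<open>(L/2) x\<^sub>0\<^sup>2\<close>, whose only role is to make the
  aggregate smoothness constant exactly \<open>L\<close>. The domain of \<open>\<rho>\<^sup>*\<close> pins \<open>p\<close> at \<open>(1/2, 1/2, 0)\<close>,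
  so \<open>f(x) = (L/16) \<Sum>\<^sub>i\<^sub><\<^sub>k (x\<^sub>i\<^sub>-\<^sub>1 - x\<^sub>i)\<^sup>2\<close>, minimised at \<open>x\<^sup>* = (a,\<dots>,a,0,\<dots>)\<close> with \<open>k\<close> entries
  \<open>a = R\<^sub>0/\<surd>k\<close>.

  Each worker's function decouples across every coordinate boundary of one parity, so its
  oracle never leaves the coordinates it already knows; reaching a new coordinate requires
  handing the current support to the worker of the other parity, which costs a communication
  round. Hence after \<open>t\<close> rounds every output
  lies in the span of the first \<open>t + 1\<close> unit vectors, and telescoping with Cauchy-Schwarz
  gives \<open>f(x) \<ge> L a\<^sup>2 / (16 (t + 2))\<close>. With \<open>k = \<lceil>\<surd>L R\<^sub>0 / (8 \<surd>\<epsilon>)\<rceil>\<close> this is \<open>> \<epsilon>\<close> unless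
  \<open>t + 1 \<ge> \<surd>L R\<^sub>0 / (8 \<surd>\<epsilon>)\<close>.
\<close>

section \<open>Euclidean norm and inner product on \<open>vec\<close>\<close>

lemma vnorm_eq_L2_set: "vnorm n x = L2_set x {..<n}"
  by (simp add: vnorm_def ip_def L2_set_def power2_eq_square)

lemma vnorm_nonneg: "0 \<le> vnorm n x"
  by (simp add: vnorm_eq_L2_set)

lemma power2_vnorm: "(vnorm n x)\<^sup>2 = (\<Sum>i<n. (x i)\<^sup>2)"
  by (simp add: vnorm_eq_L2_set L2_set_def sum_nonneg)

lemma ip_self: "ip n x x = (vnorm n x)\<^sup>2"
  unfolding power2_vnorm by (simp add: ip_def power2_eq_square)

lemma vnorm_add_le: "vnorm n (\<lambda>i. x i + y i) \<le> vnorm n x + vnorm n y"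
  unfolding vnorm_eq_L2_set by (rule L2_set_triangle_ineq)

lemma vnorm_scale: "vnorm n (\<lambda>i. c * x i) = \<bar>c\<bar> * vnorm n x"
  unfolding vnorm_eq_L2_set L2_set_def
  by (simp add: power_mult_distrib real_sqrt_mult sum_distrib_left[symmetric])

lemma vnorm_eq_0_iff: "vnorm n v = 0 \<longleftrightarrow> (\<forall>i<n. v i = 0)"
  unfolding vnorm_eq_L2_set by (auto simp: L2_set_eq_0_iff)

lemma vnorm_cong: "(\<And>i. i < n \<Longrightarrow> x i = y i) \<Longrightarrow> vnorm n x = vnorm n y"
  unfolding vnorm_def ip_def by (metis (no_types, lifting) lessThan_iff sum.cong)

lemma vnorm_indicator_prefix:
  assumes "k \<le> n"
  shows "vnorm n (\<lambda>i. if i < k then c else 0) = sqrt (real k) * \<bar>c\<bar>"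
proof -
  have "L2_set (\<lambda>i. if i < k then c else 0) {..<n} = L2_set (\<lambda>_. c) {..<k}"
    unfolding L2_set_def using assms
    by (intro arg_cong[where f = sqrt] sum.mono_neutral_cong_right) auto
  then show ?thesis by (simp add: vnorm_eq_L2_set L2_set_constant)
qed

lemma ip_lincomb: "ip n (\<lambda>i. \<alpha> * g i + \<beta> * g' i) h = \<alpha> * ip n g h + \<beta> * ip n g' h"
  by (simp add: ip_def sum.distrib sum_distrib_left algebra_simps)

lemma Vsp_mono: "D \<le> D' \<Longrightarrow> Vsp D \<subseteq> Vsp D'"
  by (auto simp: Vsp_def)

lemma vspan_subset_Vsp:
  assumes "S \<subseteq> Vsp D"
  shows "vspan S \<subseteq> Vsp D"
proof
  fix v assume "v \<in> vspan S"
  then obtain F c where F: "finite F" "F \<subseteq> S" "v = (\<lambda>i. \<Sum>w\<in>F. c w * w i)"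
    unfolding vspan_def by auto
  show "v \<in> Vsp D" unfolding Vsp_def
  proof (intro CollectI allI impI)
    fix i assume "D \<le> i"
    then have "\<forall>w\<in>F. w i = 0" using F assms by (auto simp: Vsp_def)
    then show "v i = 0" using F(3) by (auto intro!: sum.neutral)
  qed
qed

section \<open>Gradients and smoothness constants\<close>

lemma has_grad_lincomb:
  assumes g: "has_grad n f g x" and g': "has_grad n f' g' x"
  shows "has_grad n (\<lambda>y. \<alpha> * f y + \<beta> * f' y) (\<lambda>i. \<alpha> * g i + \<beta> * g' i) x"
  unfolding has_grad_def
proof (intro conjI allI impI)
  show "(\<lambda>i. \<alpha> * g i + \<beta> * g' i) \<in> Vsp n"
    using g g' by (auto simp: has_grad_def Vsp_def)
  fix e :: real assume e: "e > 0"
  define e' where "e' = e / (\<bar>\<alpha>\<bar> + \<bar>\<beta>\<bar> + 1)"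
  have e': "e' > 0" using e by (simp add: e'_def add_nonneg_pos)
  obtain d1 where d1: "d1 > 0"
    "\<forall>h\<in>Vsp n. vnorm n h < d1 \<longrightarrow> \<bar>f (vadd x h) - f x - ip n g h\<bar> \<le> e' * vnorm n h"
    using g e' unfolding has_grad_def by blast
  obtain d2 where d2: "d2 > 0"
    "\<forall>h\<in>Vsp n. vnorm n h < d2 \<longrightarrow> \<bar>f' (vadd x h) - f' x - ip n g' h\<bar> \<le> e' * vnorm n h"
    using g' e' unfolding has_grad_def by blast
  show "\<exists>d>0. \<forall>h\<in>Vsp n. vnorm n h < d \<longrightarrow>
      \<bar>\<alpha> * f (vadd x h) + \<beta> * f' (vadd x h) - (\<alpha> * f x + \<beta> * f' x)
        - ip n (\<lambda>i. \<alpha> * g i + \<beta> * g' i) h\<bar> \<le> e * vnorm n h"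
  proof (intro exI[of _ "min d1 d2"] conjI ballI impI)
    show "0 < min d1 d2" using d1 d2 by simp
    fix h assume h: "h \<in> Vsp n" "vnorm n h < min d1 d2"
    define A where "A = f (vadd x h) - f x - ip n g h"
    define B where "B = f' (vadd x h) - f' x - ip n g' h"
    have A: "\<bar>A\<bar> \<le> e' * vnorm n h" using d1 h unfolding A_def by auto
    have B: "\<bar>B\<bar> \<le> e' * vnorm n h" using d2 h unfolding B_def by auto
    have "\<bar>\<alpha> * A + \<beta> * B\<bar> \<le> \<bar>\<alpha>\<bar> * \<bar>A\<bar> + \<bar>\<beta>\<bar> * \<bar>B\<bar>"
      using abs_triangle_ineq[of "\<alpha> * A" "\<beta> * B"] by (simp add: abs_mult)
    also have "\<dots> \<le> (\<bar>\<alpha>\<bar> + \<bar>\<beta>\<bar>) * e' * vnorm n h"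
      using A B by (simp add: distrib_right mult.assoc add_mono mult_left_mono)
    also have "\<dots> \<le> (\<bar>\<alpha>\<bar> + \<bar>\<beta>\<bar> + 1) * e' * vnorm n h"
      using e' vnorm_nonneg[of n h] by (intro mult_right_mono) auto
    also have "\<dots> = e * vnorm n h" unfolding e'_def by (simp add: add_nonneg_pos)
    finally show "\<bar>\<alpha> * f (vadd x h) + \<beta> * f' (vadd x h) - (\<alpha> * f x + \<beta> * f' x)
        - ip n (\<lambda>i. \<alpha> * g i + \<beta> * g' i) h\<bar> \<le> e * vnorm n h"
      unfolding A_def B_def ip_lincomb by (simp add: algebra_simps)
  qed
qed

lemma grad_lip_lincomb:
  assumes f: "grad_lip n f L1" and f': "grad_lip n f' L2" and \<alpha>: "0 \<le> \<alpha>" and \<beta>: "0 \<le> \<beta>"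
  shows "grad_lip n (\<lambda>y. \<alpha> * f y + \<beta> * f' y) (\<alpha> * L1 + \<beta> * L2)"
proof -
  obtain G where G: "\<forall>x\<in>Vsp n. has_grad n f (G x) x"
     "\<forall>x\<in>Vsp n. \<forall>y\<in>Vsp n. vnorm n (vsub (G x) (G y)) \<le> L1 * vnorm n (vsub x y)"
    using f unfolding grad_lip_def by blast
  obtain G' where G': "\<forall>x\<in>Vsp n. has_grad n f' (G' x) x"
     "\<forall>x\<in>Vsp n. \<forall>y\<in>Vsp n. vnorm n (vsub (G' x) (G' y)) \<le> L2 * vnorm n (vsub x y)"
    using f' unfolding grad_lip_def by blast
  show ?thesis unfolding grad_lip_def
  proof (intro exI[of _ "\<lambda>x i. \<alpha> * G x i + \<beta> * G' x i"] conjI ballI)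
    fix x assume "x \<in> Vsp n"
    then show "has_grad n (\<lambda>y. \<alpha> * f y + \<beta> * f' y) (\<lambda>i. \<alpha> * G x i + \<beta> * G' x i) x"
      using G G' by (intro has_grad_lincomb) auto
  next
    fix x y assume x: "x \<in> Vsp n" and y: "y \<in> Vsp n"
    have eq: "vsub (\<lambda>i. \<alpha> * G x i + \<beta> * G' x i) (\<lambda>i. \<alpha> * G y i + \<beta> * G' y i)
        = (\<lambda>i. (\<lambda>i. \<alpha> * vsub (G x) (G y) i) i + (\<lambda>i. \<beta> * vsub (G' x) (G' y) i) i)"
      by (simp add: vsub_def algebra_simps)
    have "vnorm n (vsub (\<lambda>i. \<alpha> * G x i + \<beta> * G' x i) (\<lambda>i. \<alpha> * G y i + \<beta> * G' y i))
       \<le> \<alpha> * vnorm n (vsub (G x) (G y)) + \<beta> * vnorm n (vsub (G' x) (G' y))"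
      unfolding eq
      using vnorm_add_le[of n "\<lambda>i. \<alpha> * vsub (G x) (G y) i" "\<lambda>i. \<beta> * vsub (G' x) (G' y) i"]
        vnorm_scale[of n \<alpha>] vnorm_scale[of n \<beta>] \<alpha> \<beta> by simp
    also have "\<dots> \<le> \<alpha> * (L1 * vnorm n (vsub x y)) + \<beta> * (L2 * vnorm n (vsub x y))"
      using G G' x y \<alpha> \<beta> by (intro add_mono mult_left_mono) auto
    finally show "vnorm n (vsub (\<lambda>i. \<alpha> * G x i + \<beta> * G' x i) (\<lambda>i. \<alpha> * G y i + \<beta> * G' y i))
       \<le> (\<alpha> * L1 + \<beta> * L2) * vnorm n (vsub x y)" by (simp add: algebra_simps)
  qed
qed

lemma has_grad_unique:
  assumes g: "has_grad n f g x" and g': "has_grad n f g' x"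
  shows "\<forall>i<n. g i = g' i"
proof (rule ccontr)
  assume "\<not> (\<forall>i<n. g i = g' i)"
  define v where "v = vsub g g'"
  have vpos: "vnorm n v > 0"
    using \<open>\<not> (\<forall>i<n. g i = g' i)\<close> vnorm_eq_0_iff[of n v] vnorm_nonneg[of n v]
    by (auto simp: v_def vsub_def)
  define e where "e = vnorm n v / 4"
  have e: "e > 0" using vpos by (simp add: e_def)
  obtain d1 where d1: "d1 > 0"
    "\<forall>h\<in>Vsp n. vnorm n h < d1 \<longrightarrow> \<bar>f (vadd x h) - f x - ip n g h\<bar> \<le> e * vnorm n h"
    using g e unfolding has_grad_def by blast
  obtain d2 where d2: "d2 > 0"
    "\<forall>h\<in>Vsp n. vnorm n h < d2 \<longrightarrow> \<bar>f (vadd x h) - f x - ip n g' h\<bar> \<le> e * vnorm n h"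
    using g' e unfolding has_grad_def by blast
  define s where "s = min d1 d2 / (2 * vnorm n v)"
  have s: "s > 0" using d1 d2 vpos by (simp add: s_def)
  define h where "h = (\<lambda>i. s * v i)"
  have "v \<in> Vsp n" using g g' by (auto simp: has_grad_def Vsp_def v_def vsub_def)
  then have hV: "h \<in> Vsp n" by (auto simp: Vsp_def h_def)
  have hn: "vnorm n h = s * vnorm n v" using s by (simp add: h_def vnorm_scale)
  have "vnorm n h = min d1 d2 / 2" using vpos unfolding hn s_def by simp
  then have "vnorm n h < d1" "vnorm n h < d2" using d1 d2 by linarith+
  then have "\<bar>f (vadd x h) - f x - ip n g h\<bar> \<le> e * vnorm n h"
    "\<bar>f (vadd x h) - f x - ip n g' h\<bar> \<le> e * vnorm n h"
    using d1 d2 hV by auto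
  then have "ip n g h - ip n g' h \<le> 2 * e * vnorm n h" by linarith
  moreover have "ip n g h - ip n g' h = s * (vnorm n v)\<^sup>2"
    unfolding ip_self[symmetric]
    by (simp add: ip_def h_def v_def vsub_def sum_subtractf[symmetric] sum_distrib_left algebra_simps)
  ultimately have "s * (vnorm n v)\<^sup>2 \<le> (s * (vnorm n v)\<^sup>2) / 2"
    unfolding e_def hn by (simp add: power2_eq_square algebra_simps)
  moreover have "s * (vnorm n v)\<^sup>2 > 0" using s vpos by simp
  ultimately show False by linarith
qed

lemma smooth_const_le:
  assumes "grad_lip n f L" "0 \<le> L"
  shows "smooth_const n f \<le> L"
  unfolding smooth_const_def using assms by (intro cInf_lower) (auto intro: bdd_belowI[of _ 0])

lemma smooth_const_eqI:
  assumes "grad_lip n f L" "0 \<le> L" "\<And>L'. grad_lip n f L' \<Longrightarrow> L \<le> L'"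
  shows "smooth_const n f = L"
  unfolding smooth_const_def using assms by (intro cInf_eq_minimum) auto

section \<open>Chain quadratics\<close>

definition chain_diff :: "real \<Rightarrow> vec \<Rightarrow> nat \<Rightarrow> real" where
  "chain_diff a x i = (if i = 0 then a else x (i - 1)) - x i"

definition chain_quad :: "nat \<Rightarrow> real \<Rightarrow> (nat \<Rightarrow> real) \<Rightarrow> vec \<Rightarrow> real" where
  "chain_quad k a w x = (\<Sum>i<k. w i * (chain_diff a x i)\<^sup>2)"

definition unit_vec :: "nat \<Rightarrow> vec" where
  "unit_vec m = (\<lambda>j. if j = m then 1 else 0)"

definition chain_quad_grad :: "nat \<Rightarrow> real \<Rightarrow> (nat \<Rightarrow> real) \<Rightarrow> vec \<Rightarrow> vec" where
  "chain_quad_grad k a w x = (\<lambda>m. 2 * (\<Sum>i<k. w i * chain_diff a x i * chain_diff 0 (unit_vec m) i))"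

lemma chain_diff_vadd: "chain_diff a (vadd x h) i = chain_diff a x i + chain_diff 0 h i"
  by (simp add: chain_diff_def vadd_def)

lemma chain_diff_lincomb:
  "chain_diff a (\<lambda>i. t * x i + (1 - t) * y i) i = t * chain_diff a x i + (1 - t) * chain_diff a y i"
  by (simp add: chain_diff_def algebra_simps)

lemma sum_chain_diff_unit_vec:
  assumes "i < n"
  shows "(\<Sum>m<n. chain_diff 0 (unit_vec m) i * h m) = chain_diff 0 h i"
proof (cases i)
  case 0
  have "chain_diff 0 (unit_vec m) 0 * h m = - (if m = 0 then h m else 0)" for m
    by (simp add: chain_diff_def unit_vec_def)
  then show ?thesis using assms 0 by (simp add: sum_negf chain_diff_def)
next
  case (Suc j)
  have "chain_diff 0 (unit_vec m) (Suc j) * h m = (if m = j then h m else 0) - (if m = Suc j then h m else 0)" for m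
    by (auto simp: chain_diff_def unit_vec_def)
  then show ?thesis using assms Suc by (simp add: sum_subtractf chain_diff_def)
qed

lemma ip_chain_quad_grad:
  assumes "k \<le> n"
  shows "ip n (chain_quad_grad k a w x) h = 2 * (\<Sum>i<k. w i * chain_diff a x i * chain_diff 0 h i)"
proof -
  have "ip n (chain_quad_grad k a w x) h
      = 2 * (\<Sum>m<n. \<Sum>i<k. w i * chain_diff a x i * (chain_diff 0 (unit_vec m) i * h m))"
    unfolding ip_def chain_quad_grad_def by (simp add: sum_distrib_left sum_distrib_right mult.assoc)
  also have "\<dots> = 2 * (\<Sum>i<k. w i * chain_diff a x i * (\<Sum>m<n. chain_diff 0 (unit_vec m) i * h m))"
    by (subst sum.swap) (simp add: sum_distrib_left)
  also have "\<dots> = 2 * (\<Sum>i<k. w i * chain_diff a x i * chain_diff 0 h i)"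
    using assms by (simp add: sum_chain_diff_unit_vec)
  finally show ?thesis .
qed

lemma chain_quad_grad_Vsp:
  assumes "k \<le> n"
  shows "chain_quad_grad k a w x \<in> Vsp n"
proof -
  have "chain_diff 0 (unit_vec m) i = 0" if "i < k" "n \<le> m" for i m
    using that assms by (auto simp: chain_diff_def unit_vec_def)
  then show ?thesis unfolding Vsp_def chain_quad_grad_def by (auto intro!: sum.neutral)
qed

lemma chain_quad_grad_diff:
  "vsub (chain_quad_grad k a w x) (chain_quad_grad k a w y) = chain_quad_grad k 0 w (vsub x y)"
proof -
  have "chain_diff a x i - chain_diff a y i = chain_diff 0 (vsub x y) i" for i
    by (simp add: chain_diff_def vsub_def)
  then show ?thesis unfolding vsub_def chain_quad_grad_def
    by (auto simp: right_diff_distrib[symmetric] sum_subtractf[symmetric]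
        left_diff_distrib[symmetric] simp flip: mult.assoc intro!: ext sum.cong)
qed

lemma chain_quad_vadd:
  "chain_quad k a w (vadd x h)
     = chain_quad k a w x + 2 * (\<Sum>i<k. w i * chain_diff a x i * chain_diff 0 h i) + chain_quad k 0 w h"
  unfolding chain_quad_def chain_diff_vadd
  by (simp add: power2_eq_square algebra_simps sum.distrib sum_distrib_left)

lemma chain_quad_nonneg: "(\<And>i. 0 \<le> w i) \<Longrightarrow> 0 \<le> chain_quad k a w x"
  unfolding chain_quad_def by (intro sum_nonneg mult_nonneg_nonneg) auto

lemma chain_quad_has_grad:
  assumes kn: "k \<le> n" and w: "\<And>i. 0 \<le> w i" and M: "0 \<le> M"
    and bound: "\<And>h. chain_quad k 0 w h \<le> M * (vnorm n h)\<^sup>2"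
  shows "has_grad n (chain_quad k a w) (chain_quad_grad k a w x) x"
  unfolding has_grad_def
proof (intro conjI allI impI)
  show "chain_quad_grad k a w x \<in> Vsp n" using kn by (rule chain_quad_grad_Vsp)
  fix e :: real assume e: "e > 0"
  show "\<exists>d>0. \<forall>h\<in>Vsp n. vnorm n h < d \<longrightarrow>
      \<bar>chain_quad k a w (vadd x h) - chain_quad k a w x - ip n (chain_quad_grad k a w x) h\<bar>
        \<le> e * vnorm n h"
  proof (intro exI[of _ "e / (M + 1)"] conjI ballI impI)
    show "0 < e / (M + 1)" using e M by simp
    fix h assume "h \<in> Vsp n" and small: "vnorm n h < e / (M + 1)"
    have "M * vnorm n h \<le> (M + 1) * (e / (M + 1))"
      using small M by (intro mult_mono) (auto simp: vnorm_nonneg)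
    then have "M * vnorm n h \<le> e" using M by simp
    then have "chain_quad k 0 w h \<le> e * vnorm n h"
      using bound[of h] vnorm_nonneg[of n h]
      by (smt (verit) mult.assoc mult.commute mult_right_mono power2_eq_square)
    then show "\<bar>chain_quad k a w (vadd x h) - chain_quad k a w x
        - ip n (chain_quad_grad k a w x) h\<bar> \<le> e * vnorm n h"
      using chain_quad_nonneg[of w k 0 h, OF w]
      by (simp add: chain_quad_vadd ip_chain_quad_grad[OF kn])
  qed
qed

lemma weighted_Cauchy_Schwarz:
  assumes w: "\<And>i. 0 \<le> w i"
  shows "(\<Sum>i<k. w i * f i * g i) \<le> sqrt (\<Sum>i<k. w i * (f i)\<^sup>2) * sqrt (\<Sum>i<k. w i * (g i)\<^sup>2)"
proof -
  have "(\<Sum>i<k. w i * f i * g i) \<le> (\<Sum>i<k. \<bar>sqrt (w i) * f i\<bar> * \<bar>sqrt (w i) * g i\<bar>)"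
  proof (rule sum_mono)
    fix i
    have "w i * f i * g i = (sqrt (w i) * f i) * (sqrt (w i) * g i)"
      using w[of i] by (simp add: algebra_simps flip: real_sqrt_mult)
    then show "w i * f i * g i \<le> \<bar>sqrt (w i) * f i\<bar> * \<bar>sqrt (w i) * g i\<bar>"
      by (metis abs_ge_self abs_mult)
  qed
  also have "\<dots> \<le> L2_set (\<lambda>i. sqrt (w i) * f i) {..<k} * L2_set (\<lambda>i. sqrt (w i) * g i) {..<k}"
    by (rule L2_set_mult_ineq)
  also have "\<dots> = sqrt (\<Sum>i<k. w i * (f i)\<^sup>2) * sqrt (\<Sum>i<k. w i * (g i)\<^sup>2)"
    unfolding L2_set_def using w by (simp add: power_mult_distrib)
  finally show ?thesis .
qed

lemma vnorm_chain_quad_grad_le: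
  assumes kn: "k \<le> n" and w: "\<And>i. 0 \<le> w i" and M: "0 \<le> M"
    and bound: "\<And>h. chain_quad k 0 w h \<le> M * (vnorm n h)\<^sup>2"
  shows "vnorm n (chain_quad_grad k 0 w z) \<le> 2 * M * vnorm n z"
proof -
  define g where "g = chain_quad_grad k 0 w z"
  have "(vnorm n g)\<^sup>2 = 2 * (\<Sum>i<k. w i * chain_diff 0 z i * chain_diff 0 g i)"
    using ip_chain_quad_grad[OF kn, of 0 w z g] unfolding g_def ip_self by simp
  also have "\<dots> \<le> 2 * (sqrt (chain_quad k 0 w z) * sqrt (chain_quad k 0 w g))"
    unfolding chain_quad_def using weighted_Cauchy_Schwarz[OF w] by simp
  also have "\<dots> \<le> 2 * (sqrt (M * (vnorm n z)\<^sup>2) * sqrt (M * (vnorm n g)\<^sup>2))"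
    using bound chain_quad_nonneg[OF w] M by (intro mult_left_mono mult_mono real_sqrt_le_mono) auto
  also have "\<dots> = 2 * M * vnorm n z * vnorm n g"
    using M by (simp add: real_sqrt_mult vnorm_nonneg)
  finally have "vnorm n g * vnorm n g \<le> (2 * M * vnorm n z) * vnorm n g"
    by (simp add: power2_eq_square)
  then show ?thesis unfolding g_def[symmetric]
    using vnorm_nonneg[of n g] by (cases "vnorm n g = 0") (auto simp: vnorm_nonneg M)
qed

lemma chain_quad_grad_lip:
  assumes "k \<le> n" and "\<And>i. 0 \<le> w i" and "0 \<le> M"
    and "\<And>h. chain_quad k 0 w h \<le> M * (vnorm n h)\<^sup>2"
  shows "grad_lip n (chain_quad k a w) (2 * M)"
  unfolding grad_lip_def
  using chain_quad_has_grad[OF assms] vnorm_chain_quad_grad_le[OF assms]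
  by (auto simp: chain_quad_grad_diff intro!: exI[of _ "chain_quad_grad k a w"])

lemma sum_power2_chain_diff_le:
  assumes kn: "k \<le> n"
  shows "(\<Sum>i<k. (chain_diff 0 h i)\<^sup>2) \<le> 4 * (vnorm n h)\<^sup>2"
proof -
  define h' where "h' i = (if i = 0 then 0 else h (i - 1))" for i
  have "(chain_diff 0 h i)\<^sup>2 \<le> 2 * (h' i)\<^sup>2 + 2 * (h i)\<^sup>2" for i
  proof -
    have eq: "chain_diff 0 h i = h' i - h i" by (simp add: chain_diff_def h'_def)
    have "(h' i - h i)\<^sup>2 + (h' i + h i)\<^sup>2 = 2 * (h' i)\<^sup>2 + 2 * (h i)\<^sup>2"
      by (simp add: power2_eq_square algebra_simps)
    then show ?thesis unfolding eq using zero_le_power2[of "h' i + h i"] by linarith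
  qed
  then have "(\<Sum>i<k. (chain_diff 0 h i)\<^sup>2) \<le> 2 * (\<Sum>i<k. (h' i)\<^sup>2) + 2 * (\<Sum>i<k. (h i)\<^sup>2)"
    by (simp add: sum_distrib_left sum.distrib[symmetric] sum_mono)
  moreover have "(\<Sum>i<k. (h' i)\<^sup>2) \<le> (\<Sum>i<n. (h i)\<^sup>2)"
  proof (cases k)
    case (Suc k')
    have "(\<Sum>i<k. (h' i)\<^sup>2) = (\<Sum>i<k'. (h i)\<^sup>2)"
      unfolding Suc sum.lessThan_Suc_shift by (simp add: h'_def)
    also have "\<dots> \<le> (\<Sum>i<n. (h i)\<^sup>2)" using kn Suc by (intro sum_mono2) auto
    finally show ?thesis .
  qed (simp add: sum_nonneg)
  moreover have "(\<Sum>i<k. (h i)\<^sup>2) \<le> (\<Sum>i<n. (h i)\<^sup>2)" using kn by (intro sum_mono2) auto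
  ultimately show ?thesis unfolding power2_vnorm by linarith
qed

lemma chain_quad_le:
  assumes kn: "k \<le> n" and w: "\<And>i. 0 \<le> w i \<and> w i \<le> W"
  shows "chain_quad k 0 w h \<le> 4 * W * (vnorm n h)\<^sup>2"
proof -
  have W: "0 \<le> W" using w[of 0] by linarith
  have "chain_quad k 0 w h \<le> W * (\<Sum>i<k. (chain_diff 0 h i)\<^sup>2)"
    unfolding chain_quad_def sum_distrib_left using w by (intro sum_mono mult_right_mono) auto
  also have "\<dots> \<le> W * (4 * (vnorm n h)\<^sup>2)"
    using W sum_power2_chain_diff_le[OF kn] by (intro mult_left_mono) auto
  finally show ?thesis by simp
qed

lemma chain_quad_convex:
  assumes w: "\<And>i. 0 \<le> w i"
  shows "convex_fun_on D (chain_quad k a w)"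
  unfolding convex_fun_on_def
proof (intro ballI allI impI)
  fix x y and t :: real assume t: "0 \<le> t \<and> t \<le> 1"
  have sq: "(t * r + (1 - t) * s)\<^sup>2 \<le> t * r\<^sup>2 + (1 - t) * s\<^sup>2" for r s
    using convex_onD[OF convex_power2, of "1 - t" r s] t by simp
  have "w i * (chain_diff a (\<lambda>i. t * x i + (1 - t) * y i) i)\<^sup>2
      \<le> t * (w i * (chain_diff a x i)\<^sup>2) + (1 - t) * (w i * (chain_diff a y i)\<^sup>2)" for i
  proof -
    have "w i * (chain_diff a (\<lambda>i. t * x i + (1 - t) * y i) i)\<^sup>2
        \<le> w i * (t * (chain_diff a x i)\<^sup>2 + (1 - t) * (chain_diff a y i)\<^sup>2)"
      unfolding chain_diff_lincomb by (rule mult_left_mono[OF sq w])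
    then show ?thesis by (simp add: algebra_simps)
  qed
  then show "chain_quad k a w (\<lambda>i. t * x i + (1 - t) * y i)
      \<le> t * chain_quad k a w x + (1 - t) * chain_quad k a w y"
    unfolding chain_quad_def by (simp add: sum_mono sum.distrib[symmetric] sum_distrib_left)
qed

section \<open>Oracles preserve coordinate supports\<close>

definition vhead :: "nat \<Rightarrow> vec \<Rightarrow> vec" where
  "vhead E x = (\<lambda>i. if i < E then x i else 0)"

definition vtail :: "nat \<Rightarrow> vec \<Rightarrow> vec" where
  "vtail E x = (\<lambda>i. if i < E then 0 else x i)"

definition decouples_at :: "nat \<Rightarrow> (vec \<Rightarrow> real) \<Rightarrow> bool" where
  "decouples_at E f \<longleftrightarrow>
     (\<forall>x. f x = f (vhead E x) + f (vtail E x) - f vzero) \<and>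
     (\<forall>y s. f (\<lambda>i. s * vtail E y i) - f vzero = s\<^sup>2 * (f (vtail E y) - f vzero)) \<and>
     (\<forall>y. f vzero \<le> f (vtail E y))"

lemma chain_quad_decouples_at:
  assumes "E = 0 \<Longrightarrow> a = 0 \<or> w 0 = 0" and "0 < E \<Longrightarrow> E < k \<Longrightarrow> w E = 0"
    and w: "\<And>i. 0 \<le> w i"
  shows "decouples_at E (chain_quad k a w)"
proof -
  have split: "w i * (chain_diff a x i)\<^sup>2 = w i * (chain_diff a (vhead E x) i)\<^sup>2
      + w i * (chain_diff a (vtail E x) i)\<^sup>2 - w i * (chain_diff a vzero i)\<^sup>2" if "i < k" for i x
  proof -
    consider "i < E" | "E < i" | "i = E" by linarith
    then show ?thesis
    proof cases
      case 3
      then show ?thesis using assms(2) that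
        by (cases "E = 0") (simp_all add: chain_diff_def vhead_def vtail_def vzero_def)
    qed (auto simp: chain_diff_def vhead_def vtail_def vzero_def)
  qed
  have scale: "w i * (chain_diff a (\<lambda>i. s * vtail E y i) i)\<^sup>2 - w i * (chain_diff a vzero i)\<^sup>2
     = s\<^sup>2 * (w i * (chain_diff a (vtail E y) i)\<^sup>2 - w i * (chain_diff a vzero i)\<^sup>2)" for i s y
    using assms(1) by (cases "i = 0"; cases "E = 0")
      (auto simp: chain_diff_def vzero_def vtail_def power2_eq_square algebra_simps)
  have least: "w i * (chain_diff a vzero i)\<^sup>2 \<le> w i * (chain_diff a (vtail E y) i)\<^sup>2" for i y
    using assms(1) w[of i]
    by (cases "i = 0"; cases "E = 0") (auto simp: chain_diff_def vzero_def vtail_def)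
  show ?thesis unfolding decouples_at_def
  proof (intro conjI allI)
    fix x show "chain_quad k a w x
        = chain_quad k a w (vhead E x) + chain_quad k a w (vtail E x) - chain_quad k a w vzero"
      unfolding chain_quad_def sum.distrib[symmetric] sum_subtractf[symmetric]
      by (intro sum.cong refl split) simp
    fix y s show "chain_quad k a w (\<lambda>i. s * vtail E y i) - chain_quad k a w vzero
        = s\<^sup>2 * (chain_quad k a w (vtail E y) - chain_quad k a w vzero)"
      unfolding chain_quad_def sum_subtractf[symmetric] sum_distrib_left
      by (intro sum.cong refl scale)
    show "chain_quad k a w vzero \<le> chain_quad k a w (vtail E y)"
      unfolding chain_quad_def using least by (intro sum_mono) auto
  qed
qed

text \<open>
  If \<open>\<pi>'\<close> had a nonzero coordinate beyond \<open>E\<close>, its head would be strictly better: the linear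
  term and the proximal term do not increase, while testing the supremum defining the
  conjugate with points whose tail is a small multiple of \<open>vtail E \<pi>'\<close> shows that the conjugate
  drops by a positive amount.
\<close>

lemma worker_oracle_Vsp:
  assumes f: "decouples_at E f"
    and xb: "xb \<in> Vsp E" and pib: "pib \<in> Vsp E" and tau: "0 \<le> \<tau>"
    and pi: "\<pi>' \<in> worker_oracle n f xb pib \<tau>"
  shows "\<pi>' \<in> Vsp E"
proof (rule ccontr)
  assume "\<pi>' \<notin> Vsp E"
  have split: "\<And>x. f x = f (vhead E x) + f (vtail E x) - f vzero"
    and homog: "\<And>y s. f (\<lambda>i. s * vtail E y i) - f vzero = s\<^sup>2 * (f (vtail E y) - f vzero)"
    and least: "\<And>y. f vzero \<le> f (vtail E y)"
    using f unfolding decouples_at_def by blast+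
  have dom: "\<pi>' \<in> conj_dom n f" and opt: "\<And>\<pi>. \<pi> \<in> conj_dom n f \<Longrightarrow>
      ip n xb \<pi> - conj n f \<pi> - \<tau> / 2 * (vnorm n (vsub \<pi> pib))\<^sup>2
        \<le> ip n xb \<pi>' - conj n f \<pi>' - \<tau> / 2 * (vnorm n (vsub \<pi>' pib))\<^sup>2"
    using pi unfolding worker_oracle_def by auto
  have piV: "\<pi>' \<in> Vsp n" and bdd: "bdd_above ((\<lambda>x. ip n x \<pi>' - f x) ` Vsp n)"
    using dom unfolding conj_dom_def by auto
  obtain j where j: "E \<le> j" "\<pi>' j \<noteq> 0" using \<open>\<pi>' \<notin> Vsp E\<close> unfolding Vsp_def by auto
  have "j < n" using piV j unfolding Vsp_def by (metis (mono_tags, lifting) mem_Collect_eq not_less)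
  define v where "v = vtail E \<pi>'"
  define p where "p = vhead E \<pi>'"
  define vv where "vv = ip n v v"
  have vv_pos: "vv > 0"
  proof -
    have "(v j)\<^sup>2 \<le> (\<Sum>i<n. (v i)\<^sup>2)" using \<open>j < n\<close> by (intro member_le_sum) auto
    moreover have "(v j)\<^sup>2 > 0" using j by (simp add: v_def vtail_def)
    ultimately have "0 < (\<Sum>i<n. (v i)\<^sup>2)" by linarith
    then show ?thesis by (simp add: vv_def ip_self power2_vnorm)
  qed
  have vV: "v \<in> Vsp n" using piV by (auto simp: Vsp_def v_def vtail_def)
  have ip_v: "ip n v \<pi>' = vv" unfolding vv_def ip_def by (intro sum.cong) (auto simp: v_def vtail_def)
  have ip_p: "ip n x p = ip n (vhead E x) \<pi>'" for x
    unfolding ip_def p_def vhead_def by (intro sum.cong) auto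
  have head_better: "ip n x p - f x \<le> ip n (vhead E x) \<pi>' - f (vhead E x)" for x
    using ip_p[of x] split[of x] least[of x] by linarith
  obtain B where B: "\<And>x. x \<in> Vsp n \<Longrightarrow> ip n x \<pi>' - f x \<le> B"
    using bdd unfolding bdd_above_def by auto
  have head_Vsp: "x \<in> Vsp n \<Longrightarrow> vhead E x \<in> Vsp n" for x by (auto simp: Vsp_def vhead_def)
  have p_dom: "p \<in> conj_dom n f"
    unfolding conj_dom_def bdd_above_def
  proof (intro CollectI conjI exI[of _ B] ballI)
    show "p \<in> Vsp n" using piV by (auto simp: Vsp_def p_def vhead_def)
    fix r assume "r \<in> (\<lambda>x. ip n x p - f x) ` Vsp n"
    then obtain x where "x \<in> Vsp n" "r = ip n x p - f x" by auto
    then show "r \<le> B" using head_better[of x] B[OF head_Vsp] by fastforce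
  qed
  define C where "C = f v - f vzero"
  have C: "0 \<le> C" using least[of \<pi>'] by (simp add: C_def v_def)
  define s where "s = vv / (2 * (C + 1))"
  have s: "s > 0" using vv_pos C by (simp add: s_def)
  define gain where "gain = s * vv - s\<^sup>2 * C"
  have gain_pos: "gain > 0"
  proof -
    have "s * C \<le> vv / 2" using C vv_pos by (simp add: s_def field_simps)
    then have "s * (s * C) \<le> s * (vv / 2)" using s by (intro mult_left_mono) auto
    then show ?thesis using s vv_pos unfolding gain_def by (simp add: power2_eq_square algebra_simps)
  qed
  have conj_p: "conj n f p \<le> conj n f \<pi>' - gain"
    unfolding conj_def[of n f p]
  proof (rule cSUP_least)
    show "Vsp n \<noteq> {}" using vV by auto
    fix x assume x: "x \<in> Vsp n"
    define z where "z = (\<lambda>i. vhead E x i + s * v i)"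
    have zV: "z \<in> Vsp n" using x vV by (auto simp: Vsp_def z_def vhead_def)
    have "vhead E z = vhead E x" "vtail E z = (\<lambda>i. s * vtail E \<pi>' i)"
      by (auto simp: z_def vhead_def v_def vtail_def)
    then have fz: "f z = f (vhead E x) + s\<^sup>2 * C"
      using split[of z] homog[of s \<pi>'] unfolding C_def v_def by simp
    have ipz: "ip n z \<pi>' = ip n (vhead E x) \<pi>' + s * vv"
      unfolding ip_v[symmetric] ip_def z_def
      by (simp add: sum.distrib sum_distrib_left distrib_right mult.assoc)
    have "ip n z \<pi>' - f z \<le> conj n f \<pi>'"
      unfolding conj_def using bdd zV by (rule cSUP_upper2) simp
    then show "ip n x p - f x \<le> conj n f \<pi>' - gain"
      using head_better[of x] unfolding fz ipz gain_def by linarith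
  qed
  have "ip n xb p = ip n xb \<pi>'"
    unfolding ip_def p_def vhead_def using xb by (intro sum.cong) (auto simp: Vsp_def)
  moreover have "(vnorm n (vsub p pib))\<^sup>2 \<le> (vnorm n (vsub \<pi>' pib))\<^sup>2"
    unfolding power2_vnorm using pib
    by (intro sum_mono) (auto simp: vsub_def p_def vhead_def Vsp_def)
  then have "\<tau> / 2 * (vnorm n (vsub p pib))\<^sup>2 \<le> \<tau> / 2 * (vnorm n (vsub \<pi>' pib))\<^sup>2"
    using tau by (intro mult_left_mono) auto
  ultimately show False using opt[OF p_dom] conj_p gain_pos by linarith
qed

section \<open>The hard instance\<close>

definition odd_weights :: "real \<Rightarrow> nat \<Rightarrow> real" where
  "odd_weights L i = (if odd i then L / 8 else 0)"

definition even_weights :: "real \<Rightarrow> nat \<Rightarrow> real" where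
  "even_weights L i = (if even i then L / 8 else 0)"

definition origin_weight :: "real \<Rightarrow> nat \<Rightarrow> real" where
  "origin_weight L i = (if i = 0 then L / 2 else 0)"

definition hard_fun :: "nat \<Rightarrow> real \<Rightarrow> real \<Rightarrow> nat \<Rightarrow> vec \<Rightarrow> real" where
  "hard_fun k a L j =
     (if j = 0 then chain_quad k a (odd_weights L)
      else if j = 1 then chain_quad k a (even_weights L)
      else chain_quad k 0 (origin_weight L))"

definition simplex3 :: "vec set" where
  "simplex3 = {p\<in>Vsp 3. (\<forall>i<3. 0 \<le> p i) \<and> (\<Sum>i<3. p i) = 1}"

definition p_half :: vec where
  "p_half = (\<lambda>i. if i < 2 then 1 / 2 else 0)"

definition hard_problem :: "nat \<Rightarrow> nat \<Rightarrow> real \<Rightarrow> real \<Rightarrow> problem" where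
  "hard_problem n k a L = \<lparr>dim = n, nw = 3, fs = hard_fun k a L, Xs = Vsp n, Ps = simplex3,
     rdom = {p_half}, rho = (\<lambda>_. 0), udom = Vsp n, u = (\<lambda>_. 0)\<rparr>"

lemma dim_hard_problem: "dim (hard_problem n k a L) = n"
  by (simp add: hard_problem_def)

lemma weights_nonneg:
  assumes "0 < L"
  shows "0 \<le> odd_weights L i" "0 \<le> even_weights L i" "0 \<le> origin_weight L i"
  using assms by (auto simp: odd_weights_def even_weights_def origin_weight_def)

lemma p_half_simplex3: "p_half \<in> simplex3"
  by (simp add: simplex3_def p_half_def Vsp_def numeral_3_eq_3 lessThan_Suc)

lemma combo_hard_problem:
  "combo (hard_problem n k a L) p
     = (\<lambda>x. p 0 * hard_fun k a L 0 x + (p 1 * hard_fun k a L 1 x + p 2 * hard_fun k a L 2 x))"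
  by (rule ext) (simp add: combo_def hard_problem_def eval_nat_numeral lessThan_Suc algebra_simps)

lemma obj_hard_problem: "obj (hard_problem n k a L) x = L / 16 * (\<Sum>i<k. (chain_diff a x i)\<^sup>2)"
proof -
  have "Ps (hard_problem n k a L) \<inter> rdom (hard_problem n k a L) = {p_half}"
    using p_half_simplex3 by (auto simp: hard_problem_def)
  then have "obj (hard_problem n k a L) x = combo (hard_problem n k a L) p_half x"
    by (simp add: obj_def hard_problem_def)
  also have "\<dots> = 1/2 * chain_quad k a (odd_weights L) x + 1/2 * chain_quad k a (even_weights L) x"
    unfolding combo_hard_problem by (simp add: p_half_def hard_fun_def)
  also have "\<dots> = L / 16 * (\<Sum>i<k. (chain_diff a x i)\<^sup>2)"
    unfolding chain_quad_def sum_distrib_left sum.distrib[symmetric]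
    by (intro sum.cong) (auto simp: odd_weights_def even_weights_def)
  finally show ?thesis .
qed

lemma sum_origin_weight:
  assumes "0 < k"
  shows "(\<Sum>i<k. origin_weight L i * g i) = L / 2 * g 0"
proof -
  have "(\<Sum>i<k. origin_weight L i * g i) = (\<Sum>i<k. if i = 0 then L / 2 * g i else 0)"
    by (intro sum.cong) (auto simp: origin_weight_def)
  then show ?thesis using assms by simp
qed

lemma chain_quad_origin_weight:
  assumes "0 < k"
  shows "chain_quad k 0 (origin_weight L) h = L / 2 * (h 0)\<^sup>2"
  unfolding chain_quad_def sum_origin_weight[OF assms] by (simp add: chain_diff_def)

lemma chain_quad_grad_origin_weight:
  assumes "0 < k"
  shows "chain_quad_grad k 0 (origin_weight L) z = (\<lambda>i. L * z 0 * unit_vec 0 i)"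
  unfolding chain_quad_grad_def mult.assoc sum_origin_weight[OF assms]
  by (auto simp: chain_diff_def unit_vec_def)

lemma chain_quad_origin_weight_le:
  assumes "0 < L" "0 < k" "k \<le> n"
  shows "chain_quad k 0 (origin_weight L) h \<le> L / 2 * (vnorm n h)\<^sup>2"
proof -
  have "(h 0)\<^sup>2 \<le> (\<Sum>i<n. (h i)\<^sup>2)" using assms by (intro member_le_sum) auto
  then show ?thesis using assms by (simp add: chain_quad_origin_weight power2_vnorm)
qed

lemma hard_fun_grad_lip:
  assumes L: "0 < L" and k: "0 < k" and kn: "k \<le> n"
  shows "grad_lip n (hard_fun k a L j) L"
proof -
  have "chain_quad k 0 (odd_weights L) h \<le> L / 2 * (vnorm n h)\<^sup>2"
    "chain_quad k 0 (even_weights L) h \<le> L / 2 * (vnorm n h)\<^sup>2" for h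
    using chain_quad_le[OF kn, of "odd_weights L" "L / 8"] chain_quad_le[OF kn, of "even_weights L" "L / 8"] L
    by (auto simp: odd_weights_def even_weights_def)
  then show ?thesis
    using chain_quad_grad_lip[OF kn _ _, of "odd_weights L" "L / 2" a]
      chain_quad_grad_lip[OF kn _ _, of "even_weights L" "L / 2" a]
      chain_quad_grad_lip[OF kn _ _ chain_quad_origin_weight_le[OF L k kn], of 0] weights_nonneg[OF L] L
    by (auto simp: hard_fun_def)
qed

lemma vnorm_unit_vec:
  assumes "m < n"
  shows "vnorm n (unit_vec m) = 1"
proof -
  have "(\<Sum>i<n. (unit_vec m i)\<^sup>2) = (\<Sum>i<n. if i = m then 1 else 0)"
    by (intro sum.cong) (auto simp: unit_vec_def)
  then show ?thesis using assms by (simp add: vnorm_eq_L2_set L2_set_def)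
qed

lemma smooth_const_origin_quad:
  assumes L: "0 < L" and k: "0 < k" and kn: "k \<le> n"
  shows "smooth_const n (chain_quad k 0 (origin_weight L)) = L"
proof (rule smooth_const_eqI)
  show "grad_lip n (chain_quad k 0 (origin_weight L)) L"
    using hard_fun_grad_lip[OF assms, of _ 2] by (simp add: hard_fun_def)
  show "0 \<le> L" using L by simp
  fix L' assume "grad_lip n (chain_quad k 0 (origin_weight L)) L'"
  then obtain G where G: "\<forall>x\<in>Vsp n. has_grad n (chain_quad k 0 (origin_weight L)) (G x) x"
     "\<forall>x\<in>Vsp n. \<forall>y\<in>Vsp n. vnorm n (vsub (G x) (G y)) \<le> L' * vnorm n (vsub x y)"
    unfolding grad_lip_def by blast
  have n: "0 < n" using k kn by linarith
  have e0: "unit_vec 0 \<in> Vsp n" and z: "vzero \<in> Vsp n"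
    using n by (auto simp: unit_vec_def vzero_def Vsp_def)
  have "has_grad n (chain_quad k 0 (origin_weight L)) (chain_quad_grad k 0 (origin_weight L) x) x" for x
    using chain_quad_has_grad[OF kn _ _ chain_quad_origin_weight_le[OF L k kn]] weights_nonneg[OF L] L by simp
  then have "\<forall>i<n. G x i = chain_quad_grad k 0 (origin_weight L) x i" if "x \<in> Vsp n" for x
    using has_grad_unique G(1) that by blast
  then have "vnorm n (vsub (G (unit_vec 0)) (G vzero)) = vnorm n (vsub
      (chain_quad_grad k 0 (origin_weight L) (unit_vec 0)) (chain_quad_grad k 0 (origin_weight L) vzero))"
    using e0 z by (intro vnorm_cong) (simp add: vsub_def)
  also have "\<dots> = vnorm n (chain_quad_grad k 0 (origin_weight L) (vsub (unit_vec 0) vzero))"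
    by (simp only: chain_quad_grad_diff)
  also have "\<dots> = L"
    using vnorm_scale[of n L "unit_vec 0"] vnorm_unit_vec[OF n] L
    by (simp add: chain_quad_grad_origin_weight[OF k] vsub_def unit_vec_def vzero_def)
  moreover have "vnorm n (vsub (G (unit_vec 0)) (G vzero)) \<le> L' * vnorm n (vsub (unit_vec 0) vzero)"
    using G(2) e0 z by blast
  moreover have "vsub (unit_vec 0) vzero = unit_vec 0" by (simp add: vsub_def vzero_def)
  ultimately show "L \<le> L'" using vnorm_unit_vec[OF n] by simp
qed

lemma agg_smooth_hard_problem:
  assumes L: "0 < L" and k: "0 < k" and kn: "k \<le> n"
  shows "agg_smooth (hard_problem n k a L) L"
  unfolding agg_smooth_def
proof (intro conjI ballI)
  fix p assume "p \<in> Ps (hard_problem n k a L)"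
  then have nn: "0 \<le> p 0" "0 \<le> p 1" "0 \<le> p 2" and sum: "p 0 + p 1 + p 2 = 1"
    by (auto simp: hard_problem_def simplex3_def eval_nat_numeral lessThan_Suc)
  note lip = hard_fun_grad_lip[OF assms]
  have "grad_lip n (combo (hard_problem n k a L) p) (p 0 * L + 1 * (p 1 * L + p 2 * L))"
    unfolding combo_hard_problem
    using grad_lip_lincomb[OF lip grad_lip_lincomb[OF lip lip nn(2,3)] nn(1), of 1] by simp
  moreover have "p 0 * L + 1 * (p 1 * L + p 2 * L) = (p 0 + p 1 + p 2) * L"
    by (simp add: algebra_simps)
  ultimately show "smooth_const (dim (hard_problem n k a L)) (combo (hard_problem n k a L) p) \<le> L"
    using L sum by (simp add: hard_problem_def smooth_const_le)
next
  define e2 where "e2 = (\<lambda>i::nat. if i = 2 then (1::real) else 0)"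
  have "e2 \<in> Ps (hard_problem n k a L)"
    by (simp add: hard_problem_def simplex3_def e2_def Vsp_def numeral_3_eq_3 lessThan_Suc)
  moreover have "combo (hard_problem n k a L) e2 = chain_quad k 0 (origin_weight L)"
    unfolding combo_hard_problem by (rule ext) (simp add: e2_def hard_fun_def)
  ultimately show "\<exists>p\<in>Ps (hard_problem n k a L).
      smooth_const (dim (hard_problem n k a L)) (combo (hard_problem n k a L) p) = L"
    using smooth_const_origin_quad[OF assms] by (force simp: hard_problem_def)
qed

lemma closed_V_Vsp: "closed_V n (Vsp n)"
  by (auto simp: closed_V_def)

lemma convex_V_Vsp: "convex_V n (Vsp n)"
  by (auto simp: convex_V_def Vsp_def)

lemma closed_V_singleton:
  assumes "p \<in> Vsp m"
  shows "closed_V m {p}"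
  unfolding closed_V_def
proof (intro conjI allI impI)
  show "{p} \<subseteq> Vsp m" using assms by simp
  fix xs x assume h: "(\<forall>k. xs k \<in> {p}) \<and> x \<in> Vsp m \<and> conv_seq m xs x"
  have "x i = p i" for i
  proof (cases "i < m")
    case True
    then have "(\<lambda>k. xs k i) \<longlonglongrightarrow> x i" using h unfolding conv_seq_def by blast
    moreover have "(\<lambda>k. xs k i) = (\<lambda>k. p i)" using h by auto
    ultimately show ?thesis using LIMSEQ_unique tendsto_const by metis
  qed (use h assms in \<open>simp add: Vsp_def\<close>)
  then show "x \<in> {p}" by auto
qed

lemma convex_V_singleton: "p \<in> Vsp m \<Longrightarrow> convex_V m {p}"
  by (auto simp: convex_V_def algebra_simps)

lemma closed_V_simplex3: "closed_V 3 simplex3"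
  unfolding closed_V_def
proof (intro conjI allI impI)
  show "simplex3 \<subseteq> Vsp 3" by (auto simp: simplex3_def)
  fix xs x assume "(\<forall>k. xs k \<in> simplex3) \<and> x \<in> Vsp 3 \<and> conv_seq 3 xs x"
  then have xs: "\<And>k. xs k \<in> simplex3" and "x \<in> Vsp 3"
    and lim: "\<And>i. i < 3 \<Longrightarrow> (\<lambda>k. xs k i) \<longlonglongrightarrow> x i"
    by (auto simp: conv_seq_def)
  have nonneg: "\<forall>i<3. 0 \<le> x i"
    using xs by (auto intro!: LIMSEQ_le_const[OF lim] simp: simplex3_def)
  have "(\<lambda>k. \<Sum>i<3. xs k i) \<longlonglongrightarrow> (\<Sum>i<3. x i)" using lim by (intro tendsto_sum) auto
  moreover have "(\<lambda>k. \<Sum>i<3. xs k i) = (\<lambda>k. 1)" using xs by (auto simp: simplex3_def)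
  ultimately have "(\<Sum>i<3. x i) = 1" using LIMSEQ_unique tendsto_const by metis
  then show "x \<in> simplex3" using \<open>x \<in> Vsp 3\<close> nonneg by (simp add: simplex3_def)
qed

lemma convex_V_simplex3: "convex_V 3 simplex3"
  unfolding convex_V_def
proof (intro conjI ballI allI impI)
  show "simplex3 \<subseteq> Vsp 3" by (auto simp: simplex3_def)
  fix x y and t :: real assume x: "x \<in> simplex3" and y: "y \<in> simplex3" and t: "0 \<le> t \<and> t \<le> 1"
  have s: "(\<Sum>i<3. t * x i + (1 - t) * y i) = t * (\<Sum>i<3. x i) + (1 - t) * (\<Sum>i<3. y i)"
    by (simp add: sum.distrib sum_distrib_left)
  show "(\<lambda>i. t * x i + (1 - t) * y i) \<in> simplex3"
    using x y t unfolding simplex3_def Vsp_def by (auto simp: s intro!: add_nonneg_nonneg mult_nonneg_nonneg)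
qed

lemma proper_closed_convex_zero:
  assumes "D \<noteq> {}" "convex_V m D" "closed_V m D"
  shows "proper_closed_convex m D (\<lambda>_. 0)"
  unfolding proper_closed_convex_def
proof (intro conjI assms)
  show "convex_fun_on D (\<lambda>_. 0)" by (simp add: convex_fun_on_def)
  show "closed_fun m D (\<lambda>_. 0)" unfolding closed_fun_def
  proof (intro allI impI conjI)
    fix xs ts x and t :: real
    assume h: "(\<forall>k. xs k \<in> D \<and> (0::real) \<le> ts k) \<and> x \<in> Vsp m \<and> conv_seq m xs x \<and> ts \<longlonglongrightarrow> t"
    then show "x \<in> D" using assms(3) unfolding closed_V_def by blast
    show "0 \<le> t" using h by (intro LIMSEQ_le_const[of ts t]) auto
  qed
qed

lemma smooth_problem_hard_problem:
  assumes L: "0 < L" and k: "0 < k" and kn: "k \<le> n"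
  shows "smooth_problem (hard_problem n k a L)"
proof -
  have p_half: "p_half \<in> Vsp 3" by (auto simp: p_half_def Vsp_def)
  have "\<forall>j<3. convex_fun_on (Vsp n) (hard_fun k a L j) \<and> (\<exists>L'. grad_lip n (hard_fun k a L j) L')"
  proof (intro allI impI conjI)
    fix j :: nat
    show "\<exists>L'. grad_lip n (hard_fun k a L j) L'" using hard_fun_grad_lip[OF assms] by blast
    show "convex_fun_on (Vsp n) (hard_fun k a L j)"
      using chain_quad_convex weights_nonneg[OF L] by (simp add: hard_fun_def)
  qed
  moreover have "proper_closed_convex 3 {p_half} (\<lambda>_. 0)"
    by (intro proper_closed_convex_zero convex_V_singleton closed_V_singleton p_half) simp
  moreover have "proper_closed_convex n (Vsp n) (\<lambda>_. 0)"
    by (intro proper_closed_convex_zero convex_V_Vsp closed_V_Vsp) (auto simp: Vsp_def)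
  ultimately show ?thesis
    using closed_V_Vsp convex_V_Vsp closed_V_simplex3 convex_V_simplex3 p_half_simplex3
    by (auto simp: smooth_problem_def hard_problem_def simplex3_def)
qed

section \<open>Communication extends supports by one coordinate\<close>

text \<open>After \<open>D\<close> rounds, worker \<open>j\<close> knows at most the first \<open>hard_support j D\<close> coordinates: the
  smallest boundary \<open>\<ge> D\<close> at which its function decouples.\<close>

definition hard_support :: "nat \<Rightarrow> nat \<Rightarrow> nat" where
  "hard_support j D =
     (if j = 0 then (if even D then D else D + 1)
      else if j = 1 then (if odd D then D else D + 1)
      else D)"

definition memory_support :: "nat \<Rightarrow> state \<Rightarrow> bool" where
  "memory_support D S = (case S of (Ms, Mp, Md) \<Rightarrow> Ms \<subseteq> Vsp D \<and>
     (\<forall>j<3. Mp j \<subseteq> Vsp (hard_support j D) \<and> Md j \<subseteq> Vsp (hard_support j D)))"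

lemma hard_support_le: "D \<le> hard_support j D" "hard_support j D \<le> D + 1"
  "hard_support j D \<le> hard_support j (D + 1)"
  by (auto simp: hard_support_def)

lemma hard_fun_decouples_at:
  assumes L: "0 < L" and j: "j < 3"
  shows "decouples_at (hard_support j D) (hard_fun k a L j)"
proof -
  consider "j = 0" | "j = 1" | "j = 2" using j by linarith
  then show ?thesis
  proof cases
    case 1
    then show ?thesis unfolding hard_fun_def using weights_nonneg[OF L]
      by (auto intro!: chain_quad_decouples_at simp: hard_support_def odd_weights_def)
  next
    case 2
    then show ?thesis unfolding hard_fun_def using weights_nonneg[OF L]
      by (auto intro!: chain_quad_decouples_at simp: hard_support_def even_weights_def)
  next
    case 3
    then show ?thesis unfolding hard_fun_def using weights_nonneg[OF L]
      by (auto intro!: chain_quad_decouples_at simp: origin_weight_def)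
  qed
qed

lemma prox_set_hard_problem_Vsp:
  assumes x': "x' \<in> prox_set (hard_problem n k a L) \<eta> xb" and \<eta>: "0 < \<eta>" and xb: "xb \<in> Vsp D"
  shows "x' \<in> Vsp D"
proof -
  have x'V: "x' \<in> Vsp n"
    and opt: "\<And>x. x \<in> Vsp n \<Longrightarrow> \<eta> / 2 * (vnorm n (vsub x' xb))\<^sup>2 \<le> \<eta> / 2 * (vnorm n (vsub x xb))\<^sup>2"
    using x' by (auto simp: prox_set_def hard_problem_def)
  have "vhead n xb \<in> Vsp n" "vnorm n (vsub (vhead n xb) xb) = 0"
    by (auto simp: Vsp_def vhead_def vnorm_eq_0_iff vsub_def)
  then have "\<eta> / 2 * (vnorm n (vsub x' xb))\<^sup>2 \<le> 0" using opt by fastforce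
  then have "vnorm n (vsub x' xb) = 0" using \<eta> by (simp add: mult_le_0_iff)
  then have eq: "\<forall>i<n. x' i = xb i" by (simp add: vnorm_eq_0_iff vsub_def)
  show ?thesis unfolding Vsp_def
  proof (intro CollectI allI impI)
    fix i assume "D \<le> i"
    then show "x' i = 0" using x'V xb eq by (cases "i < n") (auto simp: Vsp_def)
  qed
qed

lemma local_step_memory_support:
  assumes "local_step (hard_problem n k a L) S S'" and "memory_support D S" and L: "0 < L"
  shows "memory_support D S'"
  using assms(1,2)
proof cases
  case (worker i xb Mp pib Md \<tau> \<pi>' Ms)
  have i: "i < 3" using worker(3) by (simp add: hard_problem_def)
  have mem: "Ms \<subseteq> Vsp D" "\<forall>j<3. Mp j \<subseteq> Vsp (hard_support j D) \<and> Md j \<subseteq> Vsp (hard_support j D)"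
    using assms(2) unfolding worker(1) memory_support_def by auto
  then have "xb \<in> Vsp (hard_support i D)" "pib \<in> Vsp (hard_support i D)"
    using worker(4,5) i vspan_subset_Vsp by blast+
  moreover have "\<pi>' \<in> Vsp (hard_support i D)"
    using worker_oracle_Vsp[OF hard_fun_decouples_at[OF L i] calculation worker(6)] worker(7)
    by (simp add: hard_problem_def)
  ultimately show ?thesis unfolding worker(2) memory_support_def using mem by auto
next
  case (server xb Ms \<eta> x' Mp Md)
  have mem: "Ms \<subseteq> Vsp D" "\<forall>j<3. Mp j \<subseteq> Vsp (hard_support j D) \<and> Md j \<subseteq> Vsp (hard_support j D)"
    using assms(2) unfolding server(1) memory_support_def by auto
  then have "x' \<in> Vsp D"
    using prox_set_hard_problem_Vsp server(3-5) vspan_subset_Vsp by blast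
  then show ?thesis unfolding server(2) memory_support_def using mem by auto
qed

lemma local_steps_memory_support:
  assumes "(local_step (hard_problem n k a L))\<^sup>*\<^sup>* S S'" and "memory_support D S" and "0 < L"
  shows "memory_support D S'"
  using assms(1,2) by induction (auto intro: local_step_memory_support[OF _ _ assms(3)])

lemma comm_round_memory_support:
  assumes "comm_round (hard_problem n k a L) S S'" and "memory_support D S"
  shows "memory_support (D + 1) S'"
proof -
  obtain Ms Mp Md where S: "S = (Ms, Mp, Md)" by (cases S)
  obtain sv rv where sr: "\<forall>i<3. sv i \<in> vspan (Mp i) \<and> rv i \<in> vspan Ms"
    and S': "S' = (Ms \<union> sv ` {..<3}, (\<lambda>i. if i < 3 then Mp i \<union> {rv i} else Mp i), Md)"
    using assms(1) unfolding comm_round_def S by (auto simp: hard_problem_def)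
  have Ms: "Ms \<subseteq> Vsp D" and Mp: "\<And>j. j < 3 \<Longrightarrow> Mp j \<subseteq> Vsp (hard_support j D)"
    and Md: "\<And>j. j < 3 \<Longrightarrow> Md j \<subseteq> Vsp (hard_support j D)"
    using assms(2) unfolding S memory_support_def by auto
  have "sv j \<in> Vsp (D + 1)" if "j < 3" for j
    using sr vspan_subset_Vsp[OF Mp] Vsp_mono[OF hard_support_le(2)] that by blast
  moreover have "rv j \<in> Vsp (hard_support j (D + 1))" if "j < 3" for j
    using sr vspan_subset_Vsp[OF Ms] Vsp_mono[of D "hard_support j (D + 1)"] hard_support_le(1)[of "D + 1" j]
      that by fastforce
  moreover have "Vsp D \<subseteq> Vsp (D + 1)" by (rule Vsp_mono) simp
  moreover have "Vsp (hard_support j D) \<subseteq> Vsp (hard_support j (D + 1))" for j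
    by (rule Vsp_mono) (rule hard_support_le(3))
  ultimately show ?thesis using Ms Mp Md unfolding S' memory_support_def by fastforce
qed

lemma reach_memory_support:
  assumes "reach (hard_problem n k a L) t S" and L: "0 < L"
  shows "memory_support t S"
  using assms(1)
proof (induction t arbitrary: S)
  case 0
  have "memory_support 0 init_state"
    by (auto simp: memory_support_def init_state_def vzero_def Vsp_def)
  then show ?case using 0 local_steps_memory_support[OF _ _ L] by simp
next
  case (Suc t)
  then show ?case
    using comm_round_memory_support local_steps_memory_support[OF _ _ L] by (metis Suc_eq_plus1 reach.simps(2))
qed

lemma outputs_hard_problem_Vsp:
  assumes "reach (hard_problem n k a L) t S" and "0 < L"
  shows "outputs (hard_problem n k a L) S \<subseteq> Vsp (t + 1)"
proof -
  obtain Ms Mp Md where S: "S = (Ms, Mp, Md)" by (cases S)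
  have "Ms \<subseteq> Vsp (t + 1)" "\<forall>j<3. Mp j \<subseteq> Vsp (t + 1)"
    using reach_memory_support[OF assms] Vsp_mono[of t "t + 1"] Vsp_mono[OF hard_support_le(2)]
    unfolding S memory_support_def by fastforce+
  then show ?thesis unfolding S outputs_def by (auto simp: hard_problem_def intro!: vspan_subset_Vsp)
qed

section \<open>Lower bound on the number of rounds\<close>

lemma sum_chain_diff: "(\<Sum>i<Suc D. chain_diff a x i) = a - x D"
  by (induction D) (simp_all add: chain_diff_def)

lemma chain_diff_energy_lower_bound:
  assumes "x \<in> Vsp D" "D < k"
  shows "a\<^sup>2 \<le> real (Suc D) * (\<Sum>i<k. (chain_diff a x i)\<^sup>2)"
proof -
  have "a = (\<Sum>i<Suc D. chain_diff a x i)" unfolding sum_chain_diff using assms(1) by (simp add: Vsp_def)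
  then have "a\<^sup>2 \<le> (\<Sum>i<Suc D. (chain_diff a x i)\<^sup>2) * real (Suc D)"
    using sum_squared_le_sum_of_squares[of "chain_diff a x" "{..<Suc D}"] by simp
  also have "\<dots> \<le> (\<Sum>i<k. (chain_diff a x i)\<^sup>2) * real (Suc D)"
    using assms(2) by (intro mult_right_mono sum_mono2) auto
  finally show ?thesis by (simp add: mult.commute)
qed

lemma is_opt_hard_problem:
  assumes "0 < L" "k \<le> n"
  shows "is_opt (hard_problem n k a L) (\<lambda>i. if i < k then a else 0)"
    and "obj (hard_problem n k a L) (\<lambda>i. if i < k then a else 0) = 0"
proof -
  show "obj (hard_problem n k a L) (\<lambda>i. if i < k then a else 0) = 0"
    unfolding obj_hard_problem by (auto simp: chain_diff_def intro!: sum.neutral)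
  moreover have "0 \<le> obj (hard_problem n k a L) x" for x
    using assms(1) by (simp add: obj_hard_problem sum_nonneg)
  ultimately show "is_opt (hard_problem n k a L) (\<lambda>i. if i < k then a else 0)"
    using assms(2) by (auto simp: is_opt_def hard_problem_def Vsp_def)
qed

lemma eps_opt_hard_problem_bound:
  assumes L: "0 < L" and kn: "k \<le> n" and "reach (hard_problem n k a L) t S"
    and "x \<in> outputs (hard_problem n k a L) S" and "eps_opt (hard_problem n k a L) \<epsilon> x"
  shows "L * a\<^sup>2 \<le> 16 * \<epsilon> * (real t + 2) \<or> real k \<le> real t + 1"
proof (rule disjCI)
  let ?energy = "\<Sum>i<k. (chain_diff a x i)\<^sup>2"
  have "obj (hard_problem n k a L) x - obj (hard_problem n k a L) (\<lambda>i. if i < k then a else 0) \<le> \<epsilon>"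
    using assms(5) is_opt_hard_problem(1)[OF L kn] unfolding eps_opt_def by blast
  then have "obj (hard_problem n k a L) x \<le> \<epsilon>"
    by (simp only: is_opt_hard_problem(2)[OF L kn] diff_0_right)
  then have energy: "L / 16 * ?energy \<le> \<epsilon>" by (simp only: obj_hard_problem)
  assume "\<not> real k \<le> real t + 1"
  moreover have "x \<in> Vsp (t + 1)" using outputs_hard_problem_Vsp assms(3,4) L by blast
  ultimately have "a\<^sup>2 \<le> (real t + 2) * ?energy"
    using chain_diff_energy_lower_bound[of x "t + 1" k a] by (simp add: add.commute)
  then have "L * a\<^sup>2 \<le> L * ((real t + 2) * ?energy)"
    using L by (intro mult_left_mono) auto
  also have "\<dots> = 16 * (real t + 2) * (L / 16 * ?energy)" by simp
  also have "\<dots> \<le> 16 * (real t + 2) * \<epsilon>"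
    using energy by (intro mult_left_mono) auto
  finally show "L * a\<^sup>2 \<le> 16 * \<epsilon> * (real t + 2)" by (simp only: mult_ac)
qed

lemma rounds_lower_bound_arith:
  fixes K T :: real
  assumes K: "0 < K" and T: "0 \<le> T" and bound: "K\<^sup>2 \<le> 16 * of_int \<lceil>K / 8\<rceil> * (T + 2)"
  shows "K / 8 \<le> T + 1"
proof (cases "K < 8")
  case False
  then have "of_int \<lceil>K / 8\<rceil> \<le> K / 4" using ceiling_correct[of "K / 8"] by linarith
  then have "16 * of_int \<lceil>K / 8\<rceil> * (T + 2) \<le> 16 * (K / 4) * (T + 2)"
    using T by (intro mult_right_mono) auto
  also have "\<dots> = K * (4 * (T + 2))" by simp
  finally have "K * K \<le> K * (4 * (T + 2))" using bound by (simp add: power2_eq_square)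
  then show ?thesis using K T by simp
qed (use T in simp)

lemma hard_problem_rounds_lower_bound:
  fixes L R \<epsilon> :: real
  defines "K \<equiv> sqrt L * R / sqrt \<epsilon>"
  assumes L: "0 < L" and \<epsilon>: "0 < \<epsilon>" and R: "0 < R"
    and k: "real k = of_int \<lceil>K / 8\<rceil>" and kn: "k \<le> n"
    and "reach (hard_problem n k (R / sqrt k) L) t S"
    and "x \<in> outputs (hard_problem n k (R / sqrt k) L) S"
    and "eps_opt (hard_problem n k (R / sqrt k) L) \<epsilon> x"
  shows "K / 8 \<le> real t + 1"
proof (cases "real k \<le> real t + 1")
  case True
  then show ?thesis using le_of_int_ceiling[of "K / 8"] k by linarith
next
  case False
  have K: "0 < K" using L \<epsilon> R by (simp add: K_def)
  then have "0 < real k" unfolding k by simp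
  have "L * (R / sqrt k)\<^sup>2 \<le> 16 * \<epsilon> * (real t + 2)"
    using eps_opt_hard_problem_bound[OF L kn assms(7-9)] False by blast
  then have "L * R\<^sup>2 \<le> 16 * \<epsilon> * (real t + 2) * real k"
    using \<open>0 < real k\<close> by (simp add: power_divide pos_divide_le_eq)
  then have "K\<^sup>2 \<le> 16 * real k * (real t + 2)"
    using \<epsilon> L by (simp add: K_def power_divide power_mult_distrib pos_divide_le_eq mult_ac)
  then show ?thesis using rounds_lower_bound_arith[OF K, of "real t"] k by simp
qed

theorem theorem5p2:
  shows "\<exists>c>0. \<forall>Lf R0 \<epsilon> n. Lf > 0 \<longrightarrow> R0 \<ge> 1 \<longrightarrow> \<epsilon> > 0 \<longrightarrow>
     real n > 2 * real_of_int \<lceil>sqrt Lf * R0 / (8 * sqrt \<epsilon>)\<rceil> \<longrightarrow>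
     (\<exists>pr. dim pr = n \<and> smooth_problem pr \<and> agg_smooth pr Lf \<and>
        (\<exists>xs. is_opt pr xs \<and> vnorm n (vsub vzero xs) \<le> R0) \<and>
        (\<forall>t S x. reach pr t S \<and> x \<in> outputs pr S \<and> eps_opt pr \<epsilon> x \<longrightarrow>
            c * (sqrt Lf * R0 / sqrt \<epsilon>) \<le> real t + 1))"
proof (intro exI[of _ "1/8::real"] conjI allI impI)
  fix Lf R0 \<epsilon> :: real and n :: nat
  assume Lf: "Lf > 0" and R0: "R0 \<ge> 1" and \<epsilon>: "\<epsilon> > 0"
    and n: "real n > 2 * real_of_int \<lceil>sqrt Lf * R0 / (8 * sqrt \<epsilon>)\<rceil>"
  define K where "K = sqrt Lf * R0 / sqrt \<epsilon>"
  define k where "k = nat \<lceil>K / 8\<rceil>"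
  define a where "a = R0 / sqrt (real k)"
  have "K > 0" using Lf R0 \<epsilon> by (simp add: K_def)
  then have k_ceil: "real k = of_int \<lceil>K / 8\<rceil>" and k: "0 < k" by (simp_all add: k_def)
  have K8: "sqrt Lf * R0 / (8 * sqrt \<epsilon>) = K / 8" by (simp add: K_def)
  have "real k \<le> real n" using n k_ceil of_nat_0_le_iff[of k] unfolding K8 by linarith
  then have kn: "k \<le> n" by simp
  have "vsub vzero (\<lambda>i. if i < k then a else 0) = (\<lambda>i. if i < k then - a else 0)"
    by (auto simp: vsub_def vzero_def)
  then have norm: "vnorm n (vsub vzero (\<lambda>i. if i < k then a else 0)) = R0"
    using vnorm_indicator_prefix[OF kn, of "- a"] k R0 by (simp add: a_def)
  show "\<exists>pr. dim pr = n \<and> smooth_problem pr \<and> agg_smooth pr Lf \<and>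
      (\<exists>xs. is_opt pr xs \<and> vnorm n (vsub vzero xs) \<le> R0) \<and>
      (\<forall>t S x. reach pr t S \<and> x \<in> outputs pr S \<and> eps_opt pr \<epsilon> x \<longrightarrow>
          1 / 8 * (sqrt Lf * R0 / sqrt \<epsilon>) \<le> real t + 1)"
  proof (intro exI[of _ "hard_problem n k a Lf"] conjI exI[of _ "\<lambda>i. if i < k then a else 0"] allI impI)
    fix t S x
    assume "reach (hard_problem n k a Lf) t S \<and> x \<in> outputs (hard_problem n k a Lf) S
      \<and> eps_opt (hard_problem n k a Lf) \<epsilon> x"
    then have "sqrt Lf * R0 / sqrt \<epsilon> / 8 \<le> real t + 1"
      using hard_problem_rounds_lower_bound[OF Lf \<epsilon> _ k_ceil[unfolded K_def] kn, folded a_def] R0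
      by (meson order.strict_trans2 zero_less_one)
    then show "1 / 8 * (sqrt Lf * R0 / sqrt \<epsilon>) \<le> real t + 1" by simp
  qed (simp_all add: dim_hard_problem norm smooth_problem_hard_problem agg_smooth_hard_problem
         is_opt_hard_problem Lf k kn)
qed simp

end
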